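(* Let $q\ge 2$, $n\ge 1$, $h\in F(n,q)$ and $u\in\Pi([n])$. Then $$\kappa(h,u)=\left\lceil \log_q\big(\chi(G_{h,u})\big)\right\rceil ,$$ where $\chi(G_{h,u})$ is the chromatic number of the confusion graph $G_{h,u}$.
   Context: Let $q\ge 2$, $A=\{0,1,\dots,q-1\}$, $[n]=\{1,\dots,n\}$, and let $F(n,q)$ be the set of all maps $A^n\to A^n$ (automata networks). For $f\in F(m,q)$ and $i\in[m]$, $f_i:A^m\to A$ is the $i$-th coordinate function of $f$. The map $f^i\in F(m,q)$ is defined by $f^i(x)=(x_1,\dots,x_{i-1},f_i(x),x_{i+1},\dots,x_m)$. For $I\subseteq[m]$, $f^I\in F(m,q)$ is defined by $f^I(x)_j=f_j(x)$ if $j\in I$ and $f^I(x)_j=x_j$ otherwise. For a word $w=(w_1,\dots,w_t)$ over $[m]$, $f^w=f^{w_t}\circ\cdots\circ f^{w_1}$. $\Pi([m])$ is the set of permutations of $[m]$, written as words $w=(w_1,\dots,w_m)$ in which each element of $[m]$ occurs once; for $i\in[m]$, $w(i)$ denotes the position $j$ with $w_j=i$. $\mathrm{pr}_{[n]}:A^m\to A^n$ is the projection onto the first $n$ coordinates. For $m\ge n$, a pair $(f,w)$ with $f\in F(m,q)$, $w\in\Pi([m])$ sequentializes $h\in F(n,q)$ if $\mathrm{pr}_{[n]}\circ f^w=h\circ \mathrm{pr}_{[n]}$. For $u\in\Pi([n])$, $w\in\Pi([m])$ respects $u$ if for all $i,j\in[n]$, $u(i)<u(j)$ implies $w(i)<w(j)$.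 The cost of sequentialization $\kappa(h,u)$ is the smallest $k\ge 0$ such that there exist $f\in F(n+k,q)$ and $w\in\Pi([n+k])$ respecting $u$ such that $(f,w)$ sequentializes $h$. The confusion graph $G_{h,u}$ is the undirected graph with vertex set $A^n$ in which $x\neq x'$ are adjacent iff $h(x)\neq h(x')$ and there exists $i\in[n]$ with $h^{\{u_1,\dots,u_i\}}(x)=h^{\{u_1,\dots,u_i\}}(x')$. *)

theory Defs
  imports Complex_Main
begin

text \<open>Configurations of A^n, A = {0..q-1}, represented as functions nat => nat
  supported on [n] = {1..n} (value 0 outside [n]).\<close>
definition cfg :: "nat \<Rightarrow> nat \<Rightarrow> (nat \<Rightarrow> nat) set" where
  "cfg q n = {x. (\<forall>i\<in>{1..n}. x i < q) \<and> (\<forall>i. i \<notin> {1..n} \<longrightarrow> x i = 0)}"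

text \<open>Automata networks F(n,q): maps sending A^n into A^n (only their values on A^n matter).\<close>
definition is_AN :: "nat \<Rightarrow> nat \<Rightarrow> ((nat \<Rightarrow> nat) \<Rightarrow> (nat \<Rightarrow> nat)) \<Rightarrow> bool" where
  "is_AN q n f \<longleftrightarrow> (\<forall>x\<in>cfg q n. f x \<in> cfg q n)"

definition upd :: "((nat \<Rightarrow> nat) \<Rightarrow> (nat \<Rightarrow> nat)) \<Rightarrow> nat set \<Rightarrow> (nat \<Rightarrow> nat) \<Rightarrow> (nat \<Rightarrow> nat)" where
  "upd f I x = (\<lambda>j. if j \<in> I then f x j else x j)"

fun seqw :: "((nat \<Rightarrow> nat) \<Rightarrow> (nat \<Rightarrow> nat)) \<Rightarrow> nat list \<Rightarrow> (nat \<Rightarrow> nat) \<Rightarrow> (nat \<Rightarrow> nat)" where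
  "seqw f [] = id"
| "seqw f (i # w) = seqw f w \<circ> upd f {i}"

definition is_perm :: "nat \<Rightarrow> nat list \<Rightarrow> bool" where
  "is_perm m w \<longleftrightarrow> distinct w \<and> set w = {1..m}"

text \<open>w(i): the (1-based) position of i in w.\<close>
definition pos :: "nat list \<Rightarrow> nat \<Rightarrow> nat" where
  "pos w i = (THE k. k \<in> {1..length w} \<and> w ! (k - 1) = i)"

definition respects_order :: "nat \<Rightarrow> nat list \<Rightarrow> nat list \<Rightarrow> bool" where
  "respects_order n u w \<longleftrightarrow> (\<forall>i\<in>{1..n}. \<forall>j\<in>{1..n}. pos u i < pos u j \<longrightarrow> pos w i < pos w j)"

definition proj :: "nat \<Rightarrow> (nat \<Rightarrow> nat) \<Rightarrow> (nat \<Rightarrow> nat)" where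
  "proj n x = (\<lambda>j. if j \<in> {1..n} then x j else 0)"

definition sequentializes ::
  "nat \<Rightarrow> nat \<Rightarrow> nat \<Rightarrow> ((nat \<Rightarrow> nat) \<Rightarrow> (nat \<Rightarrow> nat)) \<Rightarrow> nat list
     \<Rightarrow> ((nat \<Rightarrow> nat) \<Rightarrow> (nat \<Rightarrow> nat)) \<Rightarrow> bool" where
  "sequentializes q m n f w h \<longleftrightarrow> (\<forall>x\<in>cfg q m. proj n (seqw f w x) = h (proj n x))"

definition kappa :: "nat \<Rightarrow> nat \<Rightarrow> ((nat \<Rightarrow> nat) \<Rightarrow> (nat \<Rightarrow> nat)) \<Rightarrow> nat list \<Rightarrow> nat" where
  "kappa q n h u = (LEAST k. \<exists>f w. is_AN q (n + k) f \<and> is_perm (n + k) w \<and> respects_order n u w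
                                  \<and> sequentializes q (n + k) n f w h)"

definition confusion_adj :: "nat \<Rightarrow> nat \<Rightarrow> ((nat \<Rightarrow> nat) \<Rightarrow> (nat \<Rightarrow> nat)) \<Rightarrow> nat list
     \<Rightarrow> (nat \<Rightarrow> nat) \<Rightarrow> (nat \<Rightarrow> nat) \<Rightarrow> bool" where
  "confusion_adj q n h u x x' \<longleftrightarrow> x \<in> cfg q n \<and> x' \<in> cfg q n \<and> x \<noteq> x' \<and> h x \<noteq> h x' \<and>
     (\<exists>i\<in>{1..n}. upd h (set (take i u)) x = upd h (set (take i u)) x')"

definition chromatic_number :: "'a set \<Rightarrow> ('a \<Rightarrow> 'a \<Rightarrow> bool) \<Rightarrow> nat" where
  "chromatic_number V E = (LEAST k. \<exists>c. (\<forall>v\<in>V. c v < k) \<and> (\<forall>v\<in>V. \<forall>v'\<in>V. E v v' \<longrightarrow> c v \<noteq> c v'))"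

end

theory Submission
  imports Defs "HOL-Library.FuncSet"
begin

text \<open>
  If (f, w) sequentializes h with k extra coordinates, the final contents of the extra
  coordinates colour the confusion graph properly with q^k colours: let x, x' be adjacent
  because h^{u_1,...,u_i} identifies them. Among the original coordinates, the prefix of w
  ending at u_i updates exactly u_1, ..., u_i, so after this prefix the two runs differ at
  most on extra coordinates that are never touched again. If the final extra contents also
  agree, the two runs coincide after the prefix, hence at the end, and h x = h x'.

  Conversely, given a proper colouring c with q^k colours, let the network first store c(x)
  as a word in A^k in the extra coordinates and then update u_1, ..., u_n. When u_l is updated,
  the original coordinates hold h^{u_1,...,u_{l-1}}(x), and every x' with the same colour and
  the same partial update has h x' = h x, since otherwise x and x' would be adjacent; so the
  new value of u_l can be computed from the current state. Hence \<kappa>(h,u) is the least k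
  with \<chi>(G_{h,u}) \<le> q^k.
\<close>

section \<open>Sequential updates along a word\<close>

lemma seqw_append: "seqw f (v @ w) = seqw f w \<circ> seqw f v"
  by (induction v) auto

lemma seqw_take_drop: "seqw f w = seqw f (drop p w) \<circ> seqw f (take p w)"
  by (simp flip: seqw_append)

lemma seqw_apply_notin: "j \<notin> set w \<Longrightarrow> seqw f w x j = x j"
  by (induction w arbitrary: x) (auto simp: upd_def)

lemma seqw_apply_take:
  assumes "distinct w" and "j \<in> set (take p w)"
  shows "seqw f w x j = seqw f (take p w) x j"
proof -
  have "j \<notin> set (drop p w)"
    using assms set_take_disj_set_drop_if_distinct by fastforce
  then show ?thesis
    by (simp add: seqw_take_drop[of f w p] seqw_apply_notin)
qed

lemma seqw_eq_if_agree_on_prefix: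
  assumes "distinct w"
    and final: "\<And>j. j \<in> set (take p w) \<Longrightarrow> seqw f w x j = seqw f w x' j"
    and initial: "\<And>j. j \<notin> set (take p w) \<Longrightarrow> x j = x' j"
  shows "seqw f w x = seqw f w x'"
proof -
  have "seqw f (take p w) x = seqw f (take p w) x'"
  proof
    fix j
    show "seqw f (take p w) x j = seqw f (take p w) x' j"
      using final[of j] initial[of j] seqw_apply_take[OF assms(1)] seqw_apply_notin
      by (cases "j \<in> set (take p w)") simp_all
  qed
  then show ?thesis
    by (simp add: seqw_take_drop[of f w p])
qed

lemma seqw_invariant:
  assumes "\<And>l y. l < length w \<Longrightarrow> P l y \<Longrightarrow> P (Suc l) (upd f {w ! l} y)" and "P 0 y"
  shows "P (length w) (seqw f w y)"
  using assms
proof (induction w arbitrary: P y)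
  case Nil
  then show ?case by simp
next
  case (Cons a w)
  have "P (Suc (length w)) (seqw f w (upd f {a} y))"
  proof (rule Cons.IH[where P = "\<lambda>l. P (Suc l)"])
    show "P (Suc l) y \<Longrightarrow> P (Suc (Suc l)) (upd f {w ! l} y)" if "l < length w" for l y
      using Cons.prems(1)[of "Suc l"] that by simp
    show "P (Suc 0) (upd f {a} y)"
      using Cons.prems(1)[of 0] Cons.prems(2) by simp
  qed
  then show ?case by simp
qed

lemma seqw_in_cfg: "is_AN q m f \<Longrightarrow> x \<in> cfg q m \<Longrightarrow> seqw f w x \<in> cfg q m"
proof (induction w arbitrary: x)
  case Nil
  then show ?case by simp
next
  case (Cons a w)
  have "upd f {a} x \<in> cfg q m"
    using Cons.prems unfolding is_AN_def cfg_def upd_def by auto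
  then show ?case using Cons by simp
qed

lemma is_perm_length: "is_perm n u \<Longrightarrow> length u = n"
  unfolding is_perm_def by (metis card_atLeastAtMost diff_Suc_1 distinct_card)

lemma pos_nth: "distinct w \<Longrightarrow> r < length w \<Longrightarrow> pos w (w ! r) = Suc r"
  unfolding pos_def by (rule the_equality) (auto simp: nth_eq_iff_index_eq)

lemma in_set_pos: "distinct w \<Longrightarrow> j \<in> set w \<Longrightarrow> \<exists>r < length w. w ! r = j \<and> pos w j = Suc r"
  by (metis in_set_conv_nth pos_nth)

lemma in_set_take_iff_pos:
  assumes "distinct w" and "j \<in> set w"
  shows "j \<in> set (take p w) \<longleftrightarrow> pos w j \<le> p"
proof -
  obtain r where r: "r < length w" "w ! r = j" "pos w j = Suc r"
    using in_set_pos assms by blast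
  have "w ! r \<in> set (take p w) \<longleftrightarrow> r < p"
    using assms(1) r(1) by (auto simp: in_set_conv_nth nth_eq_iff_index_eq)
  then show ?thesis using r by (simp add: Suc_le_eq)
qed

lemma respects_order_pos_le_iff:
  assumes "is_perm n u" and "respects_order n u w" and "i \<in> {1..n}" and "j \<in> {1..n}"
  shows "pos w i \<le> pos w j \<longleftrightarrow> pos u i \<le> pos u j"
proof -
  have "pos u i = pos u j \<Longrightarrow> i = j"
    using assms in_set_pos[of u i] in_set_pos[of u j] unfolding is_perm_def by force
  then show ?thesis
    using assms(2-4) unfolding respects_order_def by (metis le_eq_less_or_eq not_le)
qed

lemma respects_order_prefix:
  assumes u: "is_perm n u" and w: "is_perm m w" and "n \<le> m" and resp: "respects_order n u w"
    and "i \<le> n"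
  shows "\<exists>p. set (take p w) \<inter> {1..n} = set (take i u)"
proof (cases "i = 0")
  case True
  then show ?thesis by (intro exI[of _ 0]) simp
next
  case False
  have du: "distinct u" "set u = {1..n}" and dw: "distinct w" "set w = {1..m}"
    using u w unfolding is_perm_def by auto
  define a where "a = u ! (i - 1)"
  have "i - 1 < length u"
    using False \<open>i \<le> n\<close> is_perm_length[OF u] by simp
  then have a: "a \<in> {1..n}" "pos u a = i"
    using False du pos_nth[OF du(1)] nth_mem unfolding a_def by auto
  have "j \<in> set (take (pos w a) w) \<longleftrightarrow> j \<in> set (take i u)" if j: "j \<in> {1..n}" for j
  proof -
    have "j \<in> set w" "j \<in> set u"
      using j \<open>n \<le> m\<close> dw(2) du(2) by auto
    then have "j \<in> set (take (pos w a) w) \<longleftrightarrow> pos w j \<le> pos w a"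
      by (simp add: in_set_take_iff_pos dw(1))
    also have "\<dots> \<longleftrightarrow> pos u j \<le> pos u a"
      using respects_order_pos_le_iff[OF u resp j a(1)] .
    also have "\<dots> \<longleftrightarrow> j \<in> set (take i u)"
      using \<open>j \<in> set u\<close> by (simp add: in_set_take_iff_pos du(1) a(2))
    finally show ?thesis .
  qed
  moreover have "set (take i u) \<subseteq> {1..n}"
    using du set_take_subset by metis
  ultimately show ?thesis by blast
qed

lemma cfg_mono:
  assumes "x \<in> cfg q n" and "n \<le> m" and "0 < q"
  shows "x \<in> cfg q m"
proof -
  have "x i < q" if "i \<in> {1..m}" for i
    using assms that unfolding cfg_def by (cases "i \<le> n") auto
  moreover have "x i = 0" if "i \<notin> {1..m}" for i
    using assms that unfolding cfg_def by auto
  ultimately show ?thesis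
    unfolding cfg_def by blast
qed

lemma proj_cfg: "x \<in> cfg q n \<Longrightarrow> proj n x = x"
  unfolding cfg_def proj_def by auto

lemma proj_in_cfg: "x \<in> cfg q m \<Longrightarrow> n \<le> m \<Longrightarrow> proj n x \<in> cfg q n"
  unfolding cfg_def proj_def by auto

lemma restrict_cfg_in_PiE: "x \<in> cfg q m \<Longrightarrow> restrict x {n+1..m} \<in> {n+1..m} \<rightarrow>\<^sub>E {..<q}"
  unfolding cfg_def by auto

lemma finite_cfg: "finite (cfg q n)"
proof -
  have "inj_on (\<lambda>x. restrict x {1..n}) (cfg q n)"
  proof (rule inj_onI)
    fix x y assume xy: "x \<in> cfg q n" "y \<in> cfg q n" "restrict x {1..n} = restrict y {1..n}"
    show "x = y"
    proof
      fix j
      show "x j = y j"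
      proof (cases "j \<in> {1..n}")
        case True
        then show ?thesis using fun_cong[OF xy(3), of j] by simp
      next
        case False
        then show ?thesis using xy(1,2) unfolding cfg_def by simp
      qed
    qed
  qed
  moreover have "finite ((\<lambda>x. restrict x {1..n}) ` cfg q n)"
  proof (rule finite_subset)
    show "(\<lambda>x. restrict x {1..n}) ` cfg q n \<subseteq> {1..n} \<rightarrow>\<^sub>E {..<q}"
      unfolding cfg_def by auto
  qed (simp add: finite_PiE)
  ultimately show ?thesis
    by (rule finite_imageD[rotated])
qed

lemma upd_all_cfg: "is_AN q n h \<Longrightarrow> x \<in> cfg q n \<Longrightarrow> upd h {1..n} x = h x"
  unfolding is_AN_def cfg_def upd_def by fastforce

definition colouring :: "'a set \<Rightarrow> ('a \<Rightarrow> 'a \<Rightarrow> bool) \<Rightarrow> nat \<Rightarrow> ('a \<Rightarrow> nat) \<Rightarrow> bool" where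
  "colouring V E k c \<longleftrightarrow> (\<forall>v\<in>V. c v < k) \<and> (\<forall>v\<in>V. \<forall>v'\<in>V. E v v' \<longrightarrow> c v \<noteq> c v')"

lemma chromatic_number_Least: "chromatic_number V E = (LEAST k. \<exists>c. colouring V E k c)"
  unfolding chromatic_number_def colouring_def ..

lemma chromatic_number_le: "colouring V E k c \<Longrightarrow> chromatic_number V E \<le> k"
  unfolding chromatic_number_Least by (rule Least_le) (rule exI)

lemma colouring_chromatic_number:
  assumes "finite V" and "\<And>v. \<not> E v v"
  shows "\<exists>c. colouring V E (chromatic_number V E) c"
proof -
  obtain g where "bij_betw g V {0..<card V}"
    using ex_bij_betw_finite_nat assms(1) by blast
  then have "colouring V E (card V) g"
    using assms(2) unfolding colouring_def bij_betw_def inj_on_def by auto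
  then have "\<exists>c. colouring V E (card V) c" by blast
  then show ?thesis
    unfolding chromatic_number_Least by (rule LeastI)
qed

lemma colouring_mono: "colouring V E k c \<Longrightarrow> k \<le> l \<Longrightarrow> colouring V E l c"
  unfolding colouring_def by fastforce

lemma proj_upd_outside: "i \<notin> {1..n} \<Longrightarrow> proj n (upd f {i} y) = proj n y"
  unfolding proj_def upd_def by auto

lemma proj_upd_inside: "i \<in> {1..n} \<Longrightarrow> proj n (upd f {i} y) = (proj n y)(i := f y i)"
  unfolding proj_def upd_def by auto

lemma restrict_upd_outside: "i \<notin> E \<Longrightarrow> restrict (upd f {i} y) E = restrict y E"
  unfolding upd_def by auto

section \<open>Sequentializations yield colourings\<close>

definition sequentializable :: "nat \<Rightarrow> nat \<Rightarrow> ((nat \<Rightarrow> nat) \<Rightarrow> nat \<Rightarrow> nat) \<Rightarrow> nat list \<Rightarrow> nat \<Rightarrow> bool" where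
  "sequentializable q n h u k \<longleftrightarrow> (\<exists>f w. is_AN q (n + k) f \<and> is_perm (n + k) w
      \<and> respects_order n u w \<and> sequentializes q (n + k) n f w h)"

lemma kappa_Least: "kappa q n h u = (LEAST k. sequentializable q n h u k)"
  unfolding kappa_def sequentializable_def ..

lemma sequentializes_apply:
  assumes "sequentializes q m n f w h" and "n \<le> m" and "0 < q" and "x \<in> cfg q n"
  shows "proj n (seqw f w x) = h x"
  using assms cfg_mono[OF assms(4,2,3)] proj_cfg[OF assms(4)]
  unfolding sequentializes_def by metis

lemma sequentialization_separates_confusable:
  assumes u: "is_perm n u" and w: "is_perm (n + k) w" and resp: "respects_order n u w"
    and seq: "sequentializes q (n + k) n f w h" and "0 < q"
    and adj: "confusion_adj q n h u x x'"
  shows "restrict (seqw f w x) {n+1..n+k} \<noteq> restrict (seqw f w x') {n+1..n+k}"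
proof
  assume same_new: "restrict (seqw f w x) {n+1..n+k} = restrict (seqw f w x') {n+1..n+k}"
  obtain i where "i \<in> {1..n}" and same_upd: "upd h (set (take i u)) x = upd h (set (take i u)) x'"
    and "h x \<noteq> h x'" and x: "x \<in> cfg q n" "x' \<in> cfg q n"
    using adj unfolding confusion_adj_def by blast
  then have "i \<le> n"
    by simp
  then obtain p where p: "set (take p w) \<inter> {1..n} = set (take i u)"
    using respects_order_prefix[OF u w le_add1 resp] by blast
  have dw: "distinct w" "set w = {1..n+k}"
    using w unfolding is_perm_def by auto
  have final: "seqw f w y j = h y j" if "y \<in> cfg q n" "j \<in> {1..n}" for y j
  proof -
    have "proj n (seqw f w y) j = h y j"
      using sequentializes_apply[OF seq _ \<open>0 < q\<close> that(1)] by simp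
    then show ?thesis
      using that(2) by (simp add: proj_def)
  qed
  have "seqw f w x j = seqw f w x' j" if "j \<in> set (take p w)" for j
  proof (cases "j \<in> {1..n}")
    case True
    then have "j \<in> set (take i u)"
      using that p by blast
    then have "h x j = h x' j"
      using fun_cong[OF same_upd, of j] by (simp add: upd_def)
    then show ?thesis
      using final[OF x(1) True] final[OF x(2) True] by simp
  next
    case False
    have "j \<in> set w"
      using that by (rule in_set_takeD)
    then have "j \<in> {n+1..n+k}"
      using False dw(2) by auto
    then show ?thesis
      using fun_cong[OF same_new, of j] by simp
  qed
  moreover have "x j = x' j" if "j \<notin> set (take p w)" for j
  proof -
    have "j \<notin> set (take i u)"
      using that p by blast
    then show ?thesis
      using fun_cong[OF same_upd, of j] by (simp add: upd_def)
  qed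
  ultimately have "seqw f w x = seqw f w x'"
    using seqw_eq_if_agree_on_prefix[OF dw(1)] by blast
  then show False
    using sequentializes_apply[OF seq _ \<open>0 < q\<close> x(1)] sequentializes_apply[OF seq _ \<open>0 < q\<close> x(2)]
      \<open>h x \<noteq> h x'\<close>
    by simp
qed

lemma colouring_of_sequentialization:
  assumes u: "is_perm n u" and w: "is_perm (n + k) w" and resp: "respects_order n u w"
    and seq: "sequentializes q (n + k) n f w h" and f: "is_AN q (n + k) f" and "0 < q"
  shows "\<exists>c. colouring (cfg q n) (confusion_adj q n h u) (q ^ k) c"
proof -
  let ?P = "{n+1..n+k} \<rightarrow>\<^sub>E {..<q}"
  have "finite ?P" and "card ?P = q ^ k"
    by (simp_all add: finite_PiE card_PiE)
  then obtain \<beta> where \<beta>: "bij_betw \<beta> ?P {0..<q ^ k}"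
    by (metis ex_bij_betw_finite_nat)
  define c where "c x = \<beta> (restrict (seqw f w x) {n+1..n+k})" for x
  have new_in_P: "restrict (seqw f w x) {n+1..n+k} \<in> ?P" if "x \<in> cfg q n" for x
    using restrict_cfg_in_PiE seqw_in_cfg[OF f] cfg_mono[OF that _ \<open>0 < q\<close>] by simp
  have "colouring (cfg q n) (confusion_adj q n h u) (q ^ k) c"
    unfolding colouring_def
  proof (intro conjI ballI impI)
    show "c x < q ^ k" if "x \<in> cfg q n" for x
      using bij_betw_apply[OF \<beta> new_in_P[OF that]] unfolding c_def by simp
    show "c x \<noteq> c x'" if "x \<in> cfg q n" "x' \<in> cfg q n" "confusion_adj q n h u x x'" for x x'
      using sequentialization_separates_confusable[OF u w resp seq \<open>0 < q\<close> that(3)]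
        bij_betw_imp_inj_on[OF \<beta>] new_in_P[OF that(1)] new_in_P[OF that(2)]
      unfolding c_def inj_on_def by blast
  qed
  then show ?thesis by blast
qed

section \<open>Colourings yield sequentializations\<close>

lemma same_colour_same_image:
  assumes c: "colouring (cfg q n) (confusion_adj q n h u) K c"
    and x: "x \<in> cfg q n" "x' \<in> cfg q n" and "c x = c x'" and "l \<le> n"
    and same_upd: "upd h (set (take l u)) x = upd h (set (take l u)) x'"
  shows "h x = h x'"
proof (rule ccontr)
  assume "h x \<noteq> h x'"
  have "l \<noteq> 0"
  proof
    assume "l = 0"
    then have "x = x'"
      using same_upd by (simp add: upd_def)
    then show False
      using \<open>h x \<noteq> h x'\<close> by simp
  qed
  then have "confusion_adj q n h u x x'"
    using x \<open>h x \<noteq> h x'\<close> \<open>l \<le> n\<close> same_upd unfolding confusion_adj_def by fastforce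
  then show False
    using c x \<open>c x = c x'\<close> unfolding colouring_def by blast
qed

locale colour_encoding =
  fixes q n k :: nat and h :: "(nat \<Rightarrow> nat) \<Rightarrow> nat \<Rightarrow> nat" and u :: "nat list"
    and c :: "(nat \<Rightarrow> nat) \<Rightarrow> nat" and enc :: "nat \<Rightarrow> nat \<Rightarrow> nat" and dec :: "(nat \<Rightarrow> nat) \<Rightarrow> nat"
  assumes q_pos: "0 < q" and h_AN: "is_AN q n h" and u_perm: "is_perm n u"
    and c_colouring: "colouring (cfg q n) (confusion_adj q n h u) (q ^ k) c"
    and enc_PiE: "t < q ^ k \<Longrightarrow> enc t \<in> {n+1..n+k} \<rightarrow>\<^sub>E {..<q}"
    and dec_enc: "t < q ^ k \<Longrightarrow> dec (enc t) = t"
begin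

lemma colour_less: "x \<in> cfg q n \<Longrightarrow> c x < q ^ k"
  using c_colouring unfolding colouring_def by blast

text \<open>Any configuration with the right colour and partial update determines the new value of
  an original coordinate; mod q only matters when no such configuration exists.\<close>
definition network :: "(nat \<Rightarrow> nat) \<Rightarrow> nat \<Rightarrow> nat" where
  "network y j =
    (if j \<in> {1..n} then
       h (SOME x. x \<in> cfg q n \<and> c x = dec (restrict y {n+1..n+k})
                  \<and> upd h (set (take (pos u j - 1) u)) x = proj n y) j mod q
     else if j \<in> {n+1..n+k} then enc (c (proj n y)) j
     else 0)"

definition fresh :: "nat list" where
  "fresh = [n+1..<n+k+1]"

lemma length_fresh [simp]: "length fresh = k"
  by (simp add: fresh_def del: upt_Suc)

lemma nth_fresh [simp]: "l < k \<Longrightarrow> fresh ! l = n + Suc l"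
  by (simp add: fresh_def del: upt_Suc)

definition schedule :: "nat list" where
  "schedule = fresh @ u"

lemma network_AN: "is_AN q (n + k) network"
  unfolding is_AN_def
proof
  fix y assume "y \<in> cfg q (n + k)"
  then have "enc (c (proj n y)) \<in> {n+1..n+k} \<rightarrow>\<^sub>E {..<q}"
    using enc_PiE colour_less proj_in_cfg by simp
  then show "network y \<in> cfg q (n + k)"
    unfolding cfg_def network_def using q_pos by auto
qed

lemma schedule_perm: "is_perm (n + k) schedule"
  using u_perm unfolding is_perm_def schedule_def by (auto simp: fresh_def simp del: upt_Suc)

lemma pos_schedule:
  assumes "i \<in> {1..n}"
  shows "pos schedule i = k + pos u i"
proof -
  obtain r where r: "r < length u" "u ! r = i" "pos u i = Suc r"
    using in_set_pos u_perm assms unfolding is_perm_def by blast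
  have "distinct schedule" and "k + r < length schedule"
    using schedule_perm r(1) unfolding is_perm_def schedule_def by simp_all
  then have "pos schedule (schedule ! (k + r)) = Suc (k + r)"
    by (rule pos_nth)
  moreover have "schedule ! (k + r) = i"
    using nth_append_length_plus[of fresh u r] r(2) by (simp add: schedule_def)
  ultimately show ?thesis
    using r(3) by simp
qed

lemma schedule_respects: "respects_order n u schedule"
  unfolding respects_order_def by (simp add: pos_schedule)

lemma network_writes_colour:
  assumes "x \<in> cfg q (n + k)"
  defines "y \<equiv> seqw network fresh x"
  shows "proj n y = proj n x" and "restrict y {n+1..n+k} = enc (c (proj n x))"
proof -
  let ?code = "enc (c (proj n x))"
  have code: "?code \<in> {n+1..n+k} \<rightarrow>\<^sub>E {..<q}"
    using enc_PiE colour_less proj_in_cfg[OF assms(1)] by simp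
  have "proj n y = proj n x \<and> (\<forall>j\<in>{n+1..n+length fresh}. y j = ?code j)"
    unfolding y_def
  proof (rule seqw_invariant)
    fix l z assume l: "l < length fresh" and
      z: "proj n z = proj n x \<and> (\<forall>j\<in>{n+1..n+l}. z j = ?code j)"
    have "network z (fresh ! l) = ?code (fresh ! l)"
      using l z unfolding network_def by simp
    then show "proj n (upd network {fresh ! l} z) = proj n x \<and>
        (\<forall>j\<in>{n+1..n+Suc l}. upd network {fresh ! l} z j = ?code j)"
      using l z proj_upd_outside[of "fresh ! l" n network z] by (auto simp: upd_def le_Suc_eq)
  qed simp
  then show "proj n y = proj n x" and "restrict y {n+1..n+k} = ?code"
    using code by (auto simp: fun_eq_iff PiE_def extensional_def)
qed

lemma network_at_next:
  assumes x: "x \<in> cfg q n" and "l < n"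
    and y: "proj n y = upd h (set (take l u)) x" "restrict y {n+1..n+k} = enc (c x)"
  shows "network y (u ! l) = h x (u ! l)"
proof -
  let ?b = "u ! l"
  have "l < length u" and "distinct u" and "set u = {1..n}"
    using \<open>l < n\<close> u_perm is_perm_length unfolding is_perm_def by auto
  then have b: "?b \<in> {1..n}" "pos u ?b = Suc l"
    using nth_mem pos_nth by blast+
  define P where "P x' \<longleftrightarrow> x' \<in> cfg q n \<and> c x' = dec (restrict y {n+1..n+k})
      \<and> upd h (set (take (pos u ?b - 1) u)) x' = proj n y" for x'
  have "P x"
    unfolding P_def using x y b dec_enc colour_less by simp
  then have "P (SOME x'. P x')"
    by (rule someI[of P])
  then have "(SOME x'. P x') \<in> cfg q n" and "c (SOME x'. P x') = c x"
    and "upd h (set (take l u)) (SOME x'. P x') = upd h (set (take l u)) x"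
    using b(2) y dec_enc colour_less x unfolding P_def by simp_all
  then have "h (SOME x'. P x') = h x"
    by (rule same_colour_same_image[OF c_colouring _ x _ less_imp_le[OF \<open>l < n\<close>]])
  moreover have "h x ?b < q"
    using h_AN x b(1) unfolding is_AN_def cfg_def by auto
  ultimately show ?thesis
    using b(1) unfolding network_def P_def by simp
qed

lemma network_applies_h:
  assumes x: "x \<in> cfg q n" and y: "proj n y = x" "restrict y {n+1..n+k} = enc (c x)"
  shows "proj n (seqw network u y) = h x"
proof -
  have "proj n (seqw network u y) = upd h (set (take (length u) u)) x
      \<and> restrict (seqw network u y) {n+1..n+k} = enc (c x)"
  proof (rule seqw_invariant)
    fix l z assume l: "l < length u" and
      z: "proj n z = upd h (set (take l u)) x \<and> restrict z {n+1..n+k} = enc (c x)"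
    have "l < n"
      using l is_perm_length[OF u_perm] by simp
    then have "network z (u ! l) = h x (u ! l)"
      using network_at_next x z by blast
    moreover have "u ! l \<in> {1..n}"
      using l u_perm unfolding is_perm_def by (metis nth_mem)
    ultimately have "proj n (upd network {u ! l} z) = (proj n z)(u ! l := h x (u ! l))"
      by (simp add: proj_upd_inside)
    also have "\<dots> = upd h (set (take (Suc l) u)) x"
      using z l by (auto simp: take_Suc_conv_app_nth upd_def)
    finally show "proj n (upd network {u ! l} z) = upd h (set (take (Suc l) u)) x
        \<and> restrict (upd network {u ! l} z) {n+1..n+k} = enc (c x)"
      using z \<open>u ! l \<in> {1..n}\<close> by (simp add: restrict_upd_outside)
  qed (use y in \<open>simp add: upd_def\<close>)
  moreover have "set (take (length u) u) = {1..n}"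
    using u_perm unfolding is_perm_def by simp
  ultimately show ?thesis
    using upd_all_cfg[OF h_AN x] by simp
qed

lemma network_sequentializes: "sequentializes q (n + k) n network schedule h"
  unfolding sequentializes_def
proof
  fix x assume x: "x \<in> cfg q (n + k)"
  have "seqw network schedule x = seqw network u (seqw network fresh x)"
    by (simp add: schedule_def seqw_append)
  then show "proj n (seqw network schedule x) = h (proj n x)"
    using network_applies_h[OF proj_in_cfg[OF x le_add1]] network_writes_colour[OF x] by simp
qed

end

lemma sequentializable_if_colouring:
  assumes "0 < q" and "is_AN q n h" and "is_perm n u"
    and "colouring (cfg q n) (confusion_adj q n h u) (q ^ k) c"
  shows "sequentializable q n h u k"
proof -
  let ?P = "{n+1..n+k} \<rightarrow>\<^sub>E {..<q}"
  have "\<exists>enc. bij_betw enc {0..<q ^ k} ?P"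
    by (rule finite_same_card_bij) (simp_all add: finite_PiE card_PiE)
  then obtain enc where enc: "bij_betw enc {0..<q ^ k} ?P" ..
  interpret colour_encoding q n k h u c enc "inv_into {0..<q ^ k} enc"
  proof
    show "enc t \<in> ?P" if "t < q ^ k" for t
      using bij_betw_apply[OF enc] that by simp
    show "inv_into {0..<q ^ k} enc (enc t) = t" if "t < q ^ k" for t
      using inv_into_f_f[OF bij_betw_imp_inj_on[OF enc]] that by simp
  qed (fact assms)+
  show ?thesis
    unfolding sequentializable_def
    using network_AN schedule_perm schedule_respects network_sequentializes by blast
qed

section \<open>The cost of sequentialization\<close>

lemma colouring_confusion_graph:
  "\<exists>c. colouring (cfg q n) (confusion_adj q n h u) (chromatic_number (cfg q n) (confusion_adj q n h u)) c"
  by (rule colouring_chromatic_number[OF finite_cfg]) (simp add: confusion_adj_def)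

lemma sequentializable_iff_chromatic_number_le:
  assumes "0 < q" and "is_AN q n h" and "is_perm n u"
  shows "sequentializable q n h u k \<longleftrightarrow> chromatic_number (cfg q n) (confusion_adj q n h u) \<le> q ^ k"
proof
  assume "sequentializable q n h u k"
  then obtain f w where "is_AN q (n + k) f" "is_perm (n + k) w" "respects_order n u w"
    "sequentializes q (n + k) n f w h"
    unfolding sequentializable_def by blast
  then obtain c where "colouring (cfg q n) (confusion_adj q n h u) (q ^ k) c"
    using colouring_of_sequentialization[OF \<open>is_perm n u\<close> _ _ _ _ \<open>0 < q\<close>] by metis
  then show "chromatic_number (cfg q n) (confusion_adj q n h u) \<le> q ^ k"
    by (rule chromatic_number_le)
next
  assume le: "chromatic_number (cfg q n) (confusion_adj q n h u) \<le> q ^ k"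
  obtain c where
    "colouring (cfg q n) (confusion_adj q n h u) (chromatic_number (cfg q n) (confusion_adj q n h u)) c"
    using colouring_confusion_graph by blast
  then show "sequentializable q n h u k"
    using sequentializable_if_colouring[OF assms] colouring_mono le by blast
qed

lemma ceiling_log_eq_Least_power:
  fixes q C :: nat
  assumes "2 \<le> q" and "1 \<le> C"
  shows "\<lceil>log q C\<rceil> = int (LEAST k. C \<le> q ^ k)"
proof -
  define K where "K = (LEAST k. C \<le> q ^ k)"
  have "C < 2 ^ C"
    by (rule less_exp)
  also have "\<dots> \<le> q ^ C"
    using assms(1) by (rule power_mono) simp
  finally have "C \<le> q ^ C"
    by simp
  then have CK: "C \<le> q ^ K"
    unfolding K_def by (rule LeastI)
  show ?thesis
  proof (cases K)
    case 0
    then have "C = 1"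
      using CK assms(2) by simp
    then show ?thesis
      using 0 K_def by simp
  next
    case (Suc m)
    then have "m < (LEAST k. C \<le> q ^ k)"
      unfolding K_def by simp
    then have "\<not> C \<le> q ^ m"
      by (rule not_less_Least)
    then have "q ^ m < C"
      by simp
    moreover have "C \<le> q ^ (m + 1)"
      using CK Suc by simp
    ultimately have "\<lceil>log q C\<rceil> = int m + 1"
      using assms(1) by (rule ceiling_log_nat_eq_if)
    then show ?thesis
      using Suc K_def by simp
  qed
qed

theorem mainTheorem1:
  fixes q n :: nat and h :: "(nat \<Rightarrow> nat) \<Rightarrow> (nat \<Rightarrow> nat)" and u :: "nat list"
  assumes "q \<ge> 2" and "n \<ge> 1" and "is_AN q n h" and "is_perm n u"
  shows "int (kappa q n h u) =
    \<lceil>log (real q) (real (chromatic_number (cfg q n) (confusion_adj q n h u)))\<rceil>"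
proof -
  let ?C = "chromatic_number (cfg q n) (confusion_adj q n h u)"
  have "0 < q"
    using assms(1) by simp
  obtain c where "colouring (cfg q n) (confusion_adj q n h u) ?C c"
    using colouring_confusion_graph by blast
  moreover have "(\<lambda>_. 0) \<in> cfg q n"
    using \<open>0 < q\<close> unfolding cfg_def by simp
  ultimately have "c (\<lambda>_. 0) < ?C"
    unfolding colouring_def by blast
  then have "1 \<le> ?C"
    by simp
  have "kappa q n h u = (LEAST k. ?C \<le> q ^ k)"
    using sequentializable_iff_chromatic_number_le[OF \<open>0 < q\<close> assms(3,4)] by (simp add: kappa_Least)
  then show ?thesis
    using ceiling_log_eq_Least_power[OF assms(1) \<open>1 \<le> ?C\<close>] by simp
qed

end
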